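(* Let $m$ be a monitor in open normal form, $s\in\mathit{Act}^*$ and $x$ a variable such that $m\xrightarrow{s}m_s$ for some $m_s$ having $x$ as a summand. Then $\mathcal{E}_v\vdash m=m'+s.x$ for some monitor $m'$ such that there is no $m''$ with $m'\xrightarrow{s}m''$ and $m''$ having $x$ as a summand.
   Context: Monitors: terms $m,n ::= v \mid a.m \mid m+n \mid x$ over a nonempty action set $\mathit{Act}$ and variables $x$, verdicts $v::=\mathit{end}\mid\mathit{yes}\mid\mathit{no}$. Terms are considered modulo A1–A4 below; a term $t$ has $x$ as a summand if $t=x+t'$ modulo A1–A4 for some $t'$; $\sum_{i\in I}m_i$ is $\mathit{end}$ for $I=\emptyset$. For $s=a_1\dots a_k$, $s.m$ denotes $a_1.(\cdots a_k.m)$ ($\varepsilon.m=m$), and $m\xrightarrow{s}m'$ means $m=m_0\xrightarrow{a_1}m_1\cdots\xrightarrow{a_k}m_k=m'$, where $\xrightarrow{a}$ is the least relation with $a.m\xrightarrow{a}m$, $m\xrightarrow{a}m'$ implying $m+n\xrightarrow{a}m'$ and $n+m\xrightarrow{a}m'$, and $v\xrightarrow{a}v$ for verdicts $v$ (variables have no transitions). An open normal form is a term $\sum_{a\in A}a.m_a+\sum_{i\in I}x_i\ [+\mathit{yes}]\ [+\mathit{no}]$ with $A\subseteq\mathit{Act}$ finite (one summand per $a\in A$), $\{x_i\mid i\in I\}$ a finite set of distinct variables, and each $m_a$ an open normal form different from $\mathit{end}$. $\mathcal{E}\vdash m=n$ denotes derivability by the rules of equational logic. $\mathcal{E}_v$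 consists of (A1) $x+y=y+x$; (A2) $x+(y+z)=(x+y)+z$; (A3) $x+x=x$; (A4) $x+\mathit{end}=x$; and, for each $a\in\mathit{Act}$, ($E_a$) $a.\mathit{end}=\mathit{end}$; ($Y_a$) $\mathit{yes}=\mathit{yes}+a.\mathit{yes}$; ($N_a$) $\mathit{no}=\mathit{no}+a.\mathit{no}$; ($D_a$) $a.(x+y)=a.x+a.y$. *)

theory Defs
  imports Main
begin

datatype ('a, 'x) mon =
    End | Yes | No
  | Pre 'a "('a, 'x) mon"
  | Plus "('a, 'x) mon" "('a, 'x) mon"
  | Var 'x

inductive ac :: "('a, 'x) mon \<Rightarrow> ('a, 'x) mon \<Rightarrow> bool" where
  ac_A1: "ac (Plus t u) (Plus u t)"
| ac_A2: "ac (Plus t (Plus u w)) (Plus (Plus t u) w)"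
| ac_A3: "ac (Plus t t) t"
| ac_A4: "ac (Plus t End) t"
| ac_refl: "ac t t"
| ac_sym: "ac t u \<Longrightarrow> ac u t"
| ac_trans: "ac t u \<Longrightarrow> ac u w \<Longrightarrow> ac t w"
| ac_Pre: "ac t u \<Longrightarrow> ac (Pre a t) (Pre a u)"
| ac_Plus: "ac t1 u1 \<Longrightarrow> ac t2 u2 \<Longrightarrow> ac (Plus t1 t2) (Plus u1 u2)"

inductive Ev :: "('a, 'x) mon \<Rightarrow> ('a, 'x) mon \<Rightarrow> bool" where
  Ev_A1: "Ev (Plus t u) (Plus u t)"
| Ev_A2: "Ev (Plus t (Plus u w)) (Plus (Plus t u) w)"
| Ev_A3: "Ev (Plus t t) t"
| Ev_A4: "Ev (Plus t End) t"
| Ev_E: "Ev (Pre a End) End"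
| Ev_Y: "Ev Yes (Plus Yes (Pre a Yes))"
| Ev_N: "Ev No (Plus No (Pre a No))"
| Ev_D: "Ev (Pre a (Plus t u)) (Plus (Pre a t) (Pre a u))"
| Ev_refl: "Ev t t"
| Ev_sym: "Ev t u \<Longrightarrow> Ev u t"
| Ev_trans: "Ev t u \<Longrightarrow> Ev u w \<Longrightarrow> Ev t w"
| Ev_Pre: "Ev t u \<Longrightarrow> Ev (Pre a t) (Pre a u)"
| Ev_Plus: "Ev t1 u1 \<Longrightarrow> Ev t2 u2 \<Longrightarrow> Ev (Plus t1 t2) (Plus u1 u2)"

inductive step :: "('a, 'x) mon \<Rightarrow> 'a \<Rightarrow> ('a, 'x) mon \<Rightarrow> bool" where
  step_Pre: "step (Pre a m) a m"
| step_PlusL: "step m a m' \<Longrightarrow> step (Plus m n) a m'"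
| step_PlusR: "step m a m' \<Longrightarrow> step (Plus n m) a m'"
| step_End: "step End a End"
| step_Yes: "step Yes a Yes"
| step_No: "step No a No"

inductive steps :: "('a, 'x) mon \<Rightarrow> 'a list \<Rightarrow> ('a, 'x) mon \<Rightarrow> bool" where
  steps_Nil: "steps m [] m"
| steps_Cons: "step m a m1 \<Longrightarrow> steps m1 s m2 \<Longrightarrow> steps m (a # s) m2"

definition prefix :: "'a list \<Rightarrow> ('a, 'x) mon \<Rightarrow> ('a, 'x) mon" where
  "prefix s m = foldr Pre s m"

definition has_summand :: "('a, 'x) mon \<Rightarrow> 'x \<Rightarrow> bool" where
  "has_summand t x \<longleftrightarrow> (\<exists>t'. ac t (Plus (Var x) t'))"

definition sumT :: "('a, 'x) mon list \<Rightarrow> ('a, 'x) mon" where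
  "sumT ts = foldr Plus ts End"

inductive onf :: "('a, 'x) mon \<Rightarrow> bool" where
  onf_intro:
  "distinct (map fst ps) \<Longrightarrow> distinct xs \<Longrightarrow>
   (\<forall>p\<in>set ps. onf (snd p) \<and> \<not> ac (snd p) End) \<Longrightarrow>
   ac m (sumT (map (\<lambda>p. Pre (fst p) (snd p)) ps @ map Var xs
               @ (if y then [Yes] else []) @ (if n then [No] else []))) \<Longrightarrow>
   onf m"

end

theory Submission
  imports Defs
begin

text \<open>Induction on \<open>s\<close>. Write \<open>m\<close>, modulo A1--A4, as a sum of its normal-form summands. For
  \<open>s = []\<close> the summand \<open>x\<close> occurs among them and is split off. For \<open>s = a # s'\<close> the only
  summand that can reach \<open>x\<close> along \<open>s\<close> is the unique \<open>a.u\<close>; the induction hypothesis gives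
  \<open>u = u' + s'.x\<close>, and \<open>D\<^sub>a\<close> turns \<open>a.(u' + s'.x)\<close> into \<open>a.u' + s.x\<close>.\<close>

definition reaches_summand :: "('a, 'x) mon \<Rightarrow> 'a list \<Rightarrow> 'x \<Rightarrow> bool" where
  "reaches_summand t s x \<longleftrightarrow> (\<exists>t'. steps t s t' \<and> has_summand t' x)"

lemmas ac_trans' [trans] = ac.ac_trans
lemmas Ev_trans' [trans] = Ev.Ev_trans

lemma ac_imp_Ev: "ac t u \<Longrightarrow> Ev t u"
  by (induction rule: ac.induct) (auto intro: Ev.intros)

lemma ac_Plus_swap_right: "ac (Plus (Plus t u) w) (Plus (Plus t w) u)"
proof -
  have "ac (Plus (Plus t u) w) (Plus t (Plus u w))" by (rule ac_sym, rule ac_A2)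
  also have "ac \<dots> (Plus t (Plus w u))" by (intro ac_Plus ac_refl ac_A1)
  also have "ac \<dots> (Plus (Plus t w) u)" by (rule ac_A2)
  finally show ?thesis .
qed

fun summand_vars :: "('a, 'x) mon \<Rightarrow> 'x set" where
  "summand_vars (Var y) = {y}"
| "summand_vars (Plus t u) = summand_vars t \<union> summand_vars u"
| "summand_vars _ = {}"

lemma ac_summand_vars_eq: "ac t u \<Longrightarrow> summand_vars t = summand_vars u"
  by (induction rule: ac.induct) auto

lemma has_summand_imp_summand_vars: "has_summand t x \<Longrightarrow> x \<in> summand_vars t"
  unfolding has_summand_def using ac_summand_vars_eq by fastforce

lemma sumT_Cons: "sumT (t # ts) = Plus t (sumT ts)"
  by (simp add: sumT_def)

lemma summand_vars_sumT: "summand_vars (sumT ts) = (\<Union>t\<in>set ts. summand_vars t)"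
  by (induction ts) (auto simp: sumT_def)

lemma ac_sumT_absorb: "t \<in> set ts \<Longrightarrow> ac (Plus t (sumT ts)) (sumT ts)"
proof (induction ts)
  case (Cons u ts)
  show ?case
  proof (cases "t = u")
    case True
    have "ac (Plus u (Plus u (sumT ts))) (Plus (Plus u u) (sumT ts))" by (rule ac_A2)
    also have "ac \<dots> (Plus u (sumT ts))" by (intro ac_Plus ac_A3 ac_refl)
    finally show ?thesis using True by (simp add: sumT_Cons)
  next
    case False
    then have IH: "ac (Plus t (sumT ts)) (sumT ts)" using Cons by simp
    have "ac (Plus t (Plus u (sumT ts))) (Plus (Plus t u) (sumT ts))" by (rule ac_A2)
    also have "ac \<dots> (Plus (Plus u t) (sumT ts))" by (intro ac_Plus ac_A1 ac_refl)
    also have "ac \<dots> (Plus u (Plus t (sumT ts)))" by (rule ac_sym, rule ac_A2)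
    also have "ac \<dots> (Plus u (sumT ts))" by (intro ac_Plus ac_refl IH)
    finally show ?thesis by (simp add: sumT_Cons)
  qed
qed simp

lemma ac_sumT_absorb_subset: "set ts \<subseteq> set us \<Longrightarrow> ac (Plus (sumT ts) (sumT us)) (sumT us)"
proof (induction ts)
  case Nil
  have "ac (Plus End (sumT us)) (Plus (sumT us) End)" by (rule ac_A1)
  also have "ac \<dots> (sumT us)" by (rule ac_A4)
  finally show ?case by (simp add: sumT_def)
next
  case (Cons t ts)
  have "ac (Plus (Plus t (sumT ts)) (sumT us)) (Plus t (Plus (sumT ts) (sumT us)))"
    by (rule ac_sym, rule ac_A2)
  also have "ac \<dots> (Plus t (sumT us))" using Cons by (intro ac_Plus ac_refl) auto
  also have "ac \<dots> (sumT us)" using Cons by (intro ac_sumT_absorb) auto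
  finally show ?case by (simp add: sumT_Cons)
qed

lemma ac_sumT_set_eq: "set ts = set us \<Longrightarrow> ac (sumT ts) (sumT us)"
proof -
  assume eq: "set ts = set us"
  have "ac (sumT ts) (Plus (sumT us) (sumT ts))"
    using ac_sumT_absorb_subset[of us ts] eq by (simp add: ac_sym)
  also have "ac \<dots> (Plus (sumT ts) (sumT us))" by (rule ac_A1)
  also have "ac \<dots> (sumT us)" using ac_sumT_absorb_subset[of ts us] eq by simp
  finally show ?thesis .
qed

lemma ac_sumT_removeAll: "t \<in> set ts \<Longrightarrow> ac (sumT ts) (Plus t (sumT (removeAll t ts)))"
  using ac_sumT_set_eq[of ts "t # removeAll t ts"] by (auto simp: sumT_Cons)

inductive_simps step_Plus_iff: "step (Plus m n) a m'"
inductive_simps step_Pre_iff: "step (Pre b m) a m'"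
inductive_simps step_End_iff: "step End a m'"
inductive_simps step_Yes_iff: "step Yes a m'"
inductive_simps step_No_iff: "step No a m'"
inductive_simps step_Var_iff: "step (Var y) a m'"
lemmas step_iffs = step_Plus_iff step_Pre_iff step_End_iff step_Yes_iff step_No_iff step_Var_iff

inductive_simps steps_Nil_iff: "steps m [] m'"
inductive_simps steps_Cons_iff: "steps m (a # s) m'"

lemma step_sumT: "step (sumT ts) a t' \<Longrightarrow> t' = End \<or> (\<exists>t\<in>set ts. step t a t')"
  by (induction ts) (auto simp: sumT_def step_iffs)

lemma steps_verdict: "steps v s t \<Longrightarrow> v = Yes \<or> v = No \<Longrightarrow> t = v"
  by (induction rule: steps.induct) (auto simp: step_iffs)

text \<open>A1--A4 is a simulation in both directions, except that transitions into terms equal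
  to \<open>End\<close> need not be matched: by A4, \<open>t + end\<close> has the transitions of \<open>end\<close>, which \<open>t\<close> may lack.\<close>

definition sim_upto_End :: "('a, 'x) mon \<Rightarrow> ('a, 'x) mon \<Rightarrow> bool" where
  "sim_upto_End t u \<longleftrightarrow>
     (\<forall>a t'. step t a t' \<longrightarrow> ac t' End \<or> (\<exists>u'. step u a u' \<and> ac t' u'))"

lemma sim_upto_End_Plus:
  "sim_upto_End t1 u1 \<Longrightarrow> sim_upto_End t2 u2 \<Longrightarrow> sim_upto_End (Plus t1 t2) (Plus u1 u2)"
  unfolding sim_upto_End_def step_Plus_iff by blast

lemma sim_upto_End_trans: "sim_upto_End t u \<Longrightarrow> sim_upto_End u w \<Longrightarrow> sim_upto_End t w"
  unfolding sim_upto_End_def by (meson ac.ac_trans)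

lemma ac_sim_upto_End: "ac t u \<Longrightarrow> sim_upto_End t u \<and> sim_upto_End u t"
proof (induction rule: ac.induct)
  case (ac_trans t u w)
  then show ?case using sim_upto_End_trans by blast
next
  case (ac_Plus t1 u1 t2 u2)
  then show ?case using sim_upto_End_Plus by blast
qed (auto simp: sim_upto_End_def step_iffs intro: ac.intros)

lemma ac_step:
  "ac t u \<Longrightarrow> step t a t' \<Longrightarrow> ac t' End \<or> (\<exists>u'. step u a u' \<and> ac t' u')"
  using ac_sim_upto_End unfolding sim_upto_End_def by blast

lemma reaches_summand_Nil: "reaches_summand t [] x \<longleftrightarrow> has_summand t x"
  by (simp add: reaches_summand_def steps_Nil_iff)

lemma reaches_summand_Cons:
  "reaches_summand t (a # s) x \<longleftrightarrow> (\<exists>t'. step t a t' \<and> reaches_summand t' s x)"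
  by (auto simp: reaches_summand_def steps_Cons_iff)

lemma ac_End_not_reaches_summand: "ac t End \<Longrightarrow> \<not> reaches_summand t s x"
proof (induction s arbitrary: t)
  case Nil
  then show ?case
    using has_summand_imp_summand_vars ac_summand_vars_eq by (fastforce simp: reaches_summand_Nil)
next
  case (Cons a s)
  have "ac t' End" if "step t a t'" for t'
    using ac_step[OF Cons.prems that] by (auto simp: step_iffs)
  then show ?case using Cons.IH by (auto simp: reaches_summand_Cons)
qed

lemma reaches_summand_ac: "ac t u \<Longrightarrow> reaches_summand t s x \<Longrightarrow> reaches_summand u s x"
proof (induction s arbitrary: t u)
  case Nil
  then show ?case unfolding reaches_summand_Nil has_summand_def
    by (meson ac.ac_sym ac.ac_trans)
next
  case (Cons a s)
  then obtain t' where t': "step t a t'" "reaches_summand t' s x"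
    by (auto simp: reaches_summand_Cons)
  moreover have "\<not> ac t' End" using ac_End_not_reaches_summand[of t' s x] t'(2) by blast
  ultimately obtain u' where "step u a u'" "ac t' u'"
    using ac_step[OF Cons.prems(1)] by blast
  then show ?case using Cons.IH t'(2) by (auto simp: reaches_summand_Cons)
qed

lemma reaches_summand_verdict: "v = Yes \<or> v = No \<Longrightarrow> \<not> reaches_summand v s x"
  using steps_verdict has_summand_imp_summand_vars by (fastforce simp: reaches_summand_def)

lemma reaches_summand_Pre_Cons:
  "reaches_summand (Pre b t) (a # s) x \<longleftrightarrow> b = a \<and> reaches_summand t s x"
  by (auto simp: reaches_summand_Cons step_iffs)

lemma not_reaches_summand_Var_Cons: "\<not> reaches_summand (Var y) (a # s) x"
  by (simp add: reaches_summand_Cons step_iffs)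

lemma reaches_summand_sumT_Cons:
  "reaches_summand (sumT ts) (a # s) x \<Longrightarrow> \<exists>t\<in>set ts. reaches_summand t (a # s) x"
  using step_sumT ac_End_not_reaches_summand[OF ac_refl]
  by (fastforce simp: reaches_summand_Cons)

definition normal_summands :: "('a, 'x) mon list \<Rightarrow> bool" where
  "normal_summands ts \<longleftrightarrow>
     (\<forall>t\<in>set ts. (\<exists>b u. t = Pre b u \<and> onf u) \<or> (\<exists>y. t = Var y) \<or> t = Yes \<or> t = No)
     \<and> (\<forall>b u w. Pre b u \<in> set ts \<longrightarrow> Pre b w \<in> set ts \<longrightarrow> u = w)"

lemma onf_obtain_normal_summands:
  assumes "onf m"
  obtains ts where "ac m (sumT ts)" "normal_summands ts"
proof -
  from assms obtain ps xs y n where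
    keys: "distinct (map fst ps)" and
    onf_ps: "\<forall>p\<in>set ps. onf (snd p)" and
    m: "ac m (sumT (map (\<lambda>p. Pre (fst p) (snd p)) ps @ map Var xs
                 @ (if y then [Yes] else []) @ (if n then [No] else [])))"
    by (cases rule: onf.cases) blast
  define ts where "ts = map (\<lambda>p. Pre (fst p) (snd p)) ps @ map Var xs
                 @ (if y then [Yes] else []) @ (if n then [No] else [])"
  have "(\<exists>b u. t = Pre b u \<and> onf u) \<or> (\<exists>y. t = Var y) \<or> t = Yes \<or> t = No"
    if "t \<in> set ts" for t
    using that onf_ps unfolding ts_def by (auto split: if_splits)
  moreover have "u = w" if "Pre b u \<in> set ts" "Pre b w \<in> set ts" for b u w
  proof -
    have "(b, u) \<in> set ps" "(b, w) \<in> set ps"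
      using that unfolding ts_def by (auto split: if_splits)
    with keys show ?thesis by (rule eq_key_imp_eq_value)
  qed
  ultimately have "normal_summands ts" unfolding normal_summands_def by blast
  with m show thesis unfolding ts_def by (rule that)
qed

lemma normal_summands_removeAll: "normal_summands ts \<Longrightarrow> normal_summands (removeAll t ts)"
  unfolding normal_summands_def by auto

lemma normal_summands_summand_vars:
  "normal_summands ts \<Longrightarrow> x \<in> summand_vars (sumT ts) \<longleftrightarrow> Var x \<in> set ts"
  unfolding normal_summands_def summand_vars_sumT by fastforce

lemma normal_summands_reaches_summand_Cons:
  assumes "normal_summands ts" "t \<in> set ts" "reaches_summand t (a # s) x"
  shows "\<exists>u. t = Pre a u \<and> onf u \<and> reaches_summand u s x"
  using assms reaches_summand_verdict not_reaches_summand_Var_Cons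
  unfolding normal_summands_def by (fastforce simp: reaches_summand_Pre_Cons)

lemma onf_split_reaches_summand:
  assumes "onf m" "reaches_summand m s x"
  shows "\<exists>m'. Ev m (Plus m' (prefix s (Var x))) \<and> \<not> reaches_summand m' s x"
  using assms
proof (induction s arbitrary: m)
  case Nil
  obtain ts where m: "ac m (sumT ts)" and ts: "normal_summands ts"
    using Nil.prems(1) by (rule onf_obtain_normal_summands)
  have "x \<in> summand_vars m"
    using Nil.prems(2) has_summand_imp_summand_vars by (simp add: reaches_summand_Nil)
  then have "x \<in> summand_vars (sumT ts)" using ac_summand_vars_eq[OF m] by simp
  then have "Var x \<in> set ts" using normal_summands_summand_vars[OF ts] by blast
  define m' where "m' = sumT (removeAll (Var x) ts)"
  have "ac m (Plus (Var x) m')" unfolding m'_def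
    using m ac_sumT_removeAll[OF \<open>Var x \<in> set ts\<close>] by (rule ac.ac_trans)
  also have "ac \<dots> (Plus m' (Var x))" by (rule ac_A1)
  finally have "Ev m (Plus m' (prefix [] (Var x)))" by (simp add: prefix_def ac_imp_Ev)
  moreover have "\<not> reaches_summand m' [] x"
  proof
    assume "reaches_summand m' [] x"
    then have "x \<in> summand_vars m'"
      by (simp add: reaches_summand_Nil has_summand_imp_summand_vars)
    then show False
      using normal_summands_summand_vars[OF normal_summands_removeAll[OF ts]] by (simp add: m'_def)
  qed
  ultimately show ?case by blast
next
  case (Cons a s)
  obtain ts where m: "ac m (sumT ts)" and ts: "normal_summands ts"
    using Cons.prems(1) by (rule onf_obtain_normal_summands)
  obtain t where "t \<in> set ts" "reaches_summand t (a # s) x"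
    using reaches_summand_sumT_Cons[OF reaches_summand_ac[OF m Cons.prems(2)]] by blast
  then obtain u where u: "Pre a u \<in> set ts" "onf u" "reaches_summand u s x"
    using normal_summands_reaches_summand_Cons[OF ts] by blast
  obtain u' where u_split: "Ev u (Plus u' (prefix s (Var x)))"
    and u': "\<not> reaches_summand u' s x"
    using Cons.IH[OF u(2,3)] by blast
  define rest where "rest = removeAll (Pre a u) ts"
  have "Ev m (Plus (Pre a u) (sumT rest))"
    unfolding rest_def using ac_imp_Ev[OF ac.ac_trans[OF m ac_sumT_removeAll[OF u(1)]]] .
  also have "Ev \<dots> (Plus (Pre a (Plus u' (prefix s (Var x)))) (sumT rest))"
    using u_split by (intro Ev_Plus Ev_Pre Ev_refl)
  also have "Ev \<dots> (Plus (Plus (Pre a u') (Pre a (prefix s (Var x)))) (sumT rest))"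
    by (intro Ev_Plus Ev_D Ev_refl)
  also have "Ev \<dots> (Plus (Plus (Pre a u') (sumT rest)) (prefix (a # s) (Var x)))"
    by (simp add: prefix_def ac_imp_Ev ac_Plus_swap_right)
  finally have split: "Ev m (Plus (sumT (Pre a u' # rest)) (prefix (a # s) (Var x)))"
    by (simp add: sumT_Cons)
  have "\<not> reaches_summand t (a # s) x" if "t \<in> set rest" for t
  proof
    assume "reaches_summand t (a # s) x"
    moreover have "t \<in> set ts" "t \<noteq> Pre a u" using that by (simp_all add: rest_def)
    ultimately obtain w where "t = Pre a w"
      using normal_summands_reaches_summand_Cons[OF ts] by blast
    with \<open>t \<in> set ts\<close> u(1) ts have "w = u" unfolding normal_summands_def by blast
    with \<open>t = Pre a w\<close> \<open>t \<noteq> Pre a u\<close> show False by simp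
  qed
  moreover have "\<not> reaches_summand (Pre a u') (a # s) x"
    using u' by (simp add: reaches_summand_Pre_Cons)
  ultimately have "\<not> reaches_summand (sumT (Pre a u' # rest)) (a # s) x"
    using reaches_summand_sumT_Cons[of "Pre a u' # rest" a s x] by auto
  with split show ?case by blast
qed

theorem mainTheorem13:
  fixes m ms :: "('a, 'x) mon" and s :: "'a list" and x :: 'x
  assumes "onf m"
    and "steps m s ms"
    and "has_summand ms x"
  shows "\<exists>m'. Ev m (Plus m' (prefix s (Var x)))
              \<and> \<not> (\<exists>m''. steps m' s m'' \<and> has_summand m'' x)"
  using onf_split_reaches_summand[OF assms(1)] assms(2,3)
  unfolding reaches_summand_def by blast

end
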